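(* Let $C_0$ be a binary linear $[n_0,n_0-r_0,3]_2 2$ code (minimum distance $3$, covering radius $2$) with parity-check matrix $H_0=[h_1\cdots h_{n_0}]$, $h_j\in\mathbb{F}_2^{r_0}$, and let $\mathcal P_0$ be a $2$-partition of the columns of $H_0$ into $p$ subsets. Let $m\ge 1$ satisfy $2^m\ge p$. Choose an indicator assignment $\beta_1,\dots,\beta_{n_0}$ with all $\beta_j\in\{*\}\cup(\mathbb{F}_{2^m}\setminus\{1\})$. Fix a nonzero column $w\in\mathbb{F}_2^m$, let $W_m\setminus w$ be $W_m$ with the column $w$ removed, and let $$D_6=\begin{bmatrix}0_{r_0}&0_{r_0}&0_{r_0}\\ W_m\setminus w& w& 0_m\\ 0_m& w& W_m\setminus w\end{bmatrix}$$ (an $(r_0+2m)\times(2^{m+1}-3)$ matrix, $0_v$ denoting zero blocks with $v$ rows). Let $H_C=[D_6\ A_2(h_1,\beta_1)\ \cdots\ A_2(h_{n_0},\beta_{n_0})]$. Then $H_C$ is the parity-check matrix of a binary linear $[n,n-r,3]_2 2$ code with $n=2^m(n_0+2)-3$ and $r=r_0+2m$; i.e. every vector of $\mathbb{F}_2^{r}$ is a column of $H_C$ or a sum of two columns of $H_C$.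
   Context: For a binary linear code with $r\times n$ parity-check matrix $H$ ($r$ = codimension), the covering radius is the smallest $R$ such that every vector of $\mathbb{F}_2^r$ is a sum of at most $R$ columns of $H$ (the zero vector being the empty sum). An $[n,n-r,d]_2R$ code is a binary linear code of length $n$, codimension $r$, minimum distance $d$, covering radius $R$. Partitions: for an $r\times n$ parity-check matrix $H$ and $0\le\ell\le R$, a partition of the column set of $H$ into nonempty subsets is an $(R,\ell)$-partition if every vector of $\mathbb{F}_2^r$ (including zero) is the sum of at least $\ell$ and at most $R$ columns of $H$ lying in pairwise distinct subsets (for $\ell=0$ the zero vector is the empty sum). For $R=2$ and minimum distance $\ge3$, a $(2,0)$-partition is called a $2$-partition. Construction notation: fix $m\ge1$ and identify $\mathbb{F}_2^m$ with the field $\mathbb{F}_{2^m}$ via a fixed $\mathbb{F}_2$-basis, so field products apply to $m$-bit columns. For $h\in\mathbb{F}_2^{r_0}$, an integer $R\ge2$ and $\beta\in\mathbb{F}_{2^m}\cup\{*\}$, $A_R(h,\beta)$ is the $(r_0+Rm)\times 2^m$ binary matrix whose columns, indexed by $\xi\in\mathbb{F}_{2^m}$, are $(h,\xi,\beta\xi,\beta^2\xi,\dots,\beta^{R-1}\xi)^T$ if $\beta\in\mathbb{F}_{2^m}$, and $(h,0_{(R-1)m},\xi)^T$ if $\beta=*$. $W_m$ is the $m\times(2^m-1)$ matrix whose columns are all nonzero vectors of $\mathbb{F}_2^m$ (parity-check matrix of the Hamming code). Given $H_0=[h_1\cdots h_{n_0}]$ and a partition $\mathcal P_0$ of its columns,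 an indicator assignment is a choice $\beta_j\in\mathbb{F}_{2^m}\cup\{*\}$ for each $j$ such that $\beta_i\ne\beta_j$ whenever $h_i,h_j$ lie in distinct subsets of $\mathcal P_0$. *)

theory Defs
  imports "HOL-Analysis.Finite_Cartesian_Product" "HOL-Library.Z2" "HOL-Library.Disjoint_Sets"
begin

(* A matrix is represented by the list of its columns.  Columns are elements of an
   additive group 'v (for binary codes: an F_2-vector space such as bit^'r). *)

definition sum_cols :: "'v::comm_monoid_add list \<Rightarrow> nat set \<Rightarrow> 'v" where
  "sum_cols H S = (\<Sum>i\<in>S. H ! i)"

definition covered_by :: "'v::comm_monoid_add list \<Rightarrow> nat \<Rightarrow> 'v \<Rightarrow> bool" where
  "covered_by H R v \<longleftrightarrow> (\<exists>S \<subseteq> {..<length H}. card S \<le> R \<and> sum_cols H S = v)"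

definition has_covering_radius :: "'v::comm_monoid_add list \<Rightarrow> nat \<Rightarrow> bool" where
  "has_covering_radius H R \<longleftrightarrow>
     (\<forall>v. covered_by H R v) \<and> (\<forall>R' < R. \<not> (\<forall>v. covered_by H R' v))"

(* the code with parity-check matrix H: supports of codewords *)
definition codewords :: "'v::comm_monoid_add list \<Rightarrow> nat set set" where
  "codewords H = {S. S \<subseteq> {..<length H} \<and> sum_cols H S = 0}"

definition has_min_distance :: "'v::comm_monoid_add list \<Rightarrow> nat \<Rightarrow> bool" where
  "has_min_distance H d \<longleftrightarrow>
     (\<exists>S \<in> codewords H. S \<noteq> {} \<and> card S = d) \<and>
     (\<forall>S \<in> codewords H. S \<noteq> {} \<longrightarrow> d \<le> card S)"

definition is_code :: "'v::comm_monoid_add list \<Rightarrow> nat \<Rightarrow> nat \<Rightarrow> nat \<Rightarrow> nat \<Rightarrow> bool" where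
  "is_code H n k d R \<longleftrightarrow> length H = n \<and> card (codewords H) = 2 ^ k \<and>
     has_min_distance H d \<and> has_covering_radius H R"

definition is_2_partition :: "'v::comm_monoid_add list \<Rightarrow> nat set set \<Rightarrow> bool" where
  "is_2_partition H P \<longleftrightarrow> partition_on {..<length H} P \<and>
     (\<forall>v. \<exists>S \<subseteq> {..<length H}. card S \<le> 2 \<and> sum_cols H S = v \<and>
          (\<forall>i\<in>S. \<forall>j\<in>S. i \<noteq> j \<longrightarrow> \<not> (\<exists>B\<in>P. i \<in> B \<and> j \<in> B)))"

(* indicator assignment: beta i \<noteq> beta j for columns in distinct subsets;
   None plays the role of the symbol * *)
definition indicator_assignment :: "nat \<Rightarrow> nat set set \<Rightarrow> (nat \<Rightarrow> 'f option) \<Rightarrow> bool" where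
  "indicator_assignment n0 P \<beta> \<longleftrightarrow>
     (\<forall>i<n0. \<forall>j<n0. \<not> (\<exists>B\<in>P. i \<in> B \<and> j \<in> B) \<longrightarrow> \<beta> i \<noteq> \<beta> j)"

definition field_elems :: "'f::finite list" where
  "field_elems = (SOME xs. distinct xs \<and> set xs = UNIV)"

definition A2 :: "'h \<Rightarrow> 'f::{field,finite} option \<Rightarrow> ('h \<times> 'f \<times> 'f) list" where
  "A2 h \<beta> = (case \<beta> of
      Some b \<Rightarrow> map (\<lambda>\<xi>. (h, \<xi>, b * \<xi>)) field_elems
    | None \<Rightarrow> map (\<lambda>\<xi>. (h, 0, \<xi>)) field_elems)"

definition W_minus :: "'f::{field,finite} \<Rightarrow> 'f list" where
  "W_minus w = filter (\<lambda>u. u \<noteq> 0 \<and> u \<noteq> w) field_elems"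

definition D6 :: "'f::{field,finite} \<Rightarrow> ('h::zero \<times> 'f \<times> 'f) list" where
  "D6 w = map (\<lambda>u. (0, u, 0)) (W_minus w) @ [(0, w, w)] @ map (\<lambda>u. (0, 0, u)) (W_minus w)"

definition HC :: "'f::{field,finite} \<Rightarrow> 'h::zero list \<Rightarrow> (nat \<Rightarrow> 'f option) \<Rightarrow> ('h \<times> 'f \<times> 'f) list" where
  "HC w H0 \<beta> = D6 w @ concat (map (\<lambda>j. A2 (H0 ! j) (\<beta> j)) [0..<length H0])"

end

theory Submission
  imports Defs "HOL-Number_Theory.Residues"
begin

(* Given (a, x, y), the
   2-partition together with the indicator assignment writes a as a sum of at most two
   columns of H0 with distinct indicators.  If a = h_i + h_j, one column from each of the
   two blocks suffices: beta_i <> beta_j makes the resulting 2x2 linear system for the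
   field coordinates solvable.  If a = h_i, a column of A2(h_i, beta_i) fixes x and one
   column of D6 repairs y; when the defect equals w this needs (0, w/beta_i, 0), which is
   a column of D6 because beta_i <> 1.  If a = 0, the columns of D6 suffice, except over
   F_2 where two columns of a single block are used.
   Minimum distance 3 amounts to distinct nonzero columns two of which sum to a third;
   this passes from H0 to H_C via the columns (h, 0, 0).  Since every syndrome is attained,
   the code has dimension n - r. *)

section \<open>Characteristic two\<close>

lemma CHAR_eq_2_if_card_eq_power_2:
  assumes "CARD('f::{field,finite}) = 2 ^ m"
  shows "CHAR('f) = 2"
proof -
  have "prime CHAR('f)"
    by (intro prime_CHAR_semidom finite_imp_CHAR_pos) simp
  moreover have "CHAR('f) dvd 2 ^ m"
    using CHAR_dvd_CARD[where 'a = 'f] assms(1) by simp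
  ultimately show ?thesis
    using prime_dvd_power primes_dvd_imp_eq two_is_prime_nat by blast
qed

lemma add_self_CHAR_2:
  assumes "CHAR('a::ring_1) = 2"
  shows "x + x = (0::'a)"
  using uminus_CHAR_2[OF assms, of x] right_minus[of x] by simp

lemma add_self_prod:
  assumes "\<And>a::'a::comm_monoid_add. a + a = 0" and "\<And>b::'b::comm_monoid_add. b + b = 0"
  shows "z + z = (0::'a \<times> 'b)"
  using assms by (cases z) (simp add: zero_prod_def)

lemma add_self_left:
  fixes x y :: "'a::comm_monoid_add"
  assumes "\<And>z::'a. z + z = 0"
  shows "x + (x + y) = y"
  by (metis add.assoc add_0 assms)

lemma add_eq_0_iff_eq:
  fixes x y :: "'a::comm_monoid_add"
  assumes "\<And>z::'a. z + z = 0"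
  shows "x + y = 0 \<longleftrightarrow> x = y"
  by (metis add_self_left assms)

lemma card_UNIV_bit: "CARD(bit) = 2"
proof -
  have "(UNIV :: bit set) = {0, 1}" by (auto intro: bit.exhaust)
  then have "CARD(bit) = card {0 :: bit, 1}" by (simp only:)
  then show ?thesis by simp
qed

section \<open>Codes over groups of exponent two\<close>

lemma covered_by_mono:
  assumes "covered_by H R v" and "R \<le> R'"
  shows "covered_by H R' v"
  using assms le_trans unfolding covered_by_def by blast

lemma covered_by_1_iff: "covered_by H 1 v \<longleftrightarrow> v = 0 \<or> v \<in> set H"
proof
  assume "covered_by H 1 v"
  then obtain S where S: "S \<subseteq> {..<length H}" "card S \<le> 1" "sum_cols H S = v"
    unfolding covered_by_def by blast
  have "finite S" using finite_subset[OF S(1)] by simp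
  moreover from S(2) have "card S = 0 \<or> card S = 1" by linarith
  ultimately have "S = {} \<or> (\<exists>i. S = {i})" by (auto simp: card_1_singleton_iff)
  with S show "v = 0 \<or> v \<in> set H"
    by (auto simp: sum_cols_def)
next
  assume "v = 0 \<or> v \<in> set H"
  then show "covered_by H 1 v"
  proof
    assume "v = 0"
    then show ?thesis unfolding covered_by_def sum_cols_def by (intro exI[of _ "{}"]) auto
  next
    assume "v \<in> set H"
    then obtain i where "i < length H" "H ! i = v" by (auto simp: in_set_conv_nth)
    then show ?thesis unfolding covered_by_def sum_cols_def by (intro exI[of _ "{i}"]) auto
  qed
qed

lemma covered_by_2_sumI:
  fixes H :: "'v::comm_monoid_add list"
  assumes add_self: "\<And>z::'v. z + z = 0"
    and a: "a \<in> insert 0 (set H)" and b: "b \<in> insert 0 (set H)" and v: "a + b = v"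
  shows "covered_by H 2 v"
proof (cases "a = 0 \<or> b = 0 \<or> a = b")
  case True
  with a b v add_self have "v = 0 \<or> v \<in> set H" by auto
  then have "covered_by H 1 v" unfolding covered_by_1_iff .
  then show ?thesis by (rule covered_by_mono) simp
next
  case False
  with a b obtain i j where "i < length H" "j < length H" "H ! i = a" "H ! j = b"
    by (auto simp: in_set_conv_nth)
  moreover from calculation False have "i \<noteq> j" by auto
  ultimately show ?thesis
    using v unfolding covered_by_def sum_cols_def by (intro exI[of _ "{i, j}"]) auto
qed

lemma has_covering_radius_2_iff:
  "has_covering_radius H 2 \<longleftrightarrow> (\<forall>v. covered_by H 2 v) \<and> (\<exists>v. v \<noteq> 0 \<and> v \<notin> set H)"
proof -
  have "(\<forall>R'<2. \<not> (\<forall>v. covered_by H R' v)) \<longleftrightarrow> \<not> (\<forall>v. covered_by H 1 v)"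
    using covered_by_mono[of H _ _ 1] by (auto simp: less_2_cases_iff)
  then show ?thesis
    unfolding has_covering_radius_def covered_by_1_iff by blast
qed

lemma singleton_mem_codewords_iff: "{i} \<in> codewords H \<longleftrightarrow> i < length H \<and> H ! i = 0"
  unfolding codewords_def sum_cols_def by simp

lemma doubleton_mem_codewords_iff:
  fixes H :: "'v::comm_monoid_add list"
  assumes add_self: "\<And>z::'v. z + z = 0" and "i \<noteq> j"
  shows "{i, j} \<in> codewords H \<longleftrightarrow> i < length H \<and> j < length H \<and> H ! i = H ! j"
  using assms(2) unfolding codewords_def sum_cols_def by (auto simp: add_eq_0_iff_eq[OF add_self])

lemma codewords_weight_ge_3_iff:
  fixes H :: "'v::comm_monoid_add list"
  assumes add_self: "\<And>z::'v. z + z = 0"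
  shows "(\<forall>S\<in>codewords H. S \<noteq> {} \<longrightarrow> 3 \<le> card S) \<longleftrightarrow> distinct H \<and> 0 \<notin> set H"
proof
  assume heavy: "\<forall>S\<in>codewords H. S \<noteq> {} \<longrightarrow> 3 \<le> card S"
  have "distinct H"
  proof (rule ccontr)
    assume "\<not> distinct H"
    then obtain i j where "i < length H" "j < length H" "i \<noteq> j" "H ! i = H ! j"
      by (auto simp: distinct_conv_nth)
    then have "{i, j} \<in> codewords H" "i \<noteq> j" by (simp_all add: doubleton_mem_codewords_iff[OF add_self])
    with heavy show False by fastforce
  qed
  moreover have "0 \<notin> set H"
  proof
    assume "0 \<in> set H"
    then obtain i where "i < length H" "H ! i = 0" by (auto simp: in_set_conv_nth)
    then have "{i} \<in> codewords H" by (simp add: singleton_mem_codewords_iff)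
    with heavy show False by fastforce
  qed
  ultimately show "distinct H \<and> 0 \<notin> set H" ..
next
  assume "distinct H \<and> 0 \<notin> set H"
  then have distinct: "distinct H" and nonzero: "0 \<notin> set H" by auto
  show "\<forall>S\<in>codewords H. S \<noteq> {} \<longrightarrow> 3 \<le> card S"
  proof (intro ballI impI, rule ccontr)
    fix S assume S: "S \<in> codewords H" "S \<noteq> {}" "\<not> 3 \<le> card S"
    then have "finite S" unfolding codewords_def using finite_subset by auto
    with S(2) have "card S \<noteq> 0" by simp
    with S(3) have "card S = 1 \<or> card S = 2" by linarith
    then show False
    proof
      assume "card S = 1"
      then obtain i where "S = {i}" by (rule card_1_singletonE)
      with S(1) have "i < length H" "H ! i = 0" by (simp_all add: singleton_mem_codewords_iff)
      with nonzero show False by (metis nth_mem)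
    next
      assume "card S = 2"
      then obtain i j where ij: "S = {i, j}" "i \<noteq> j" by (auto simp: card_2_iff)
      with S(1) have "i < length H" "j < length H" "H ! i = H ! j"
        by (simp_all add: doubleton_mem_codewords_iff[OF add_self])
      with ij(2) distinct show False by (simp add: nth_eq_iff_index_eq)
    qed
  qed
qed

lemma codeword_weight_3_iff:
  fixes H :: "'v::comm_monoid_add list"
  assumes add_self: "\<And>z::'v. z + z = 0" and distinct: "distinct H" and nonzero: "0 \<notin> set H"
  shows "(\<exists>S\<in>codewords H. card S = 3) \<longleftrightarrow> (\<exists>a\<in>set H. \<exists>b\<in>set H. a \<noteq> b \<and> a + b \<in> set H)"
proof
  assume "\<exists>S\<in>codewords H. card S = 3"
  then obtain i j k where ijk: "{i, j, k} \<subseteq> {..<length H}" "sum_cols H {i, j, k} = 0"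
      "i \<noteq> j" "i \<noteq> k" "j \<noteq> k"
    unfolding codewords_def by (auto simp: card_3_iff)
  then have "H ! i + H ! j + H ! k = 0" by (simp add: sum_cols_def add.assoc)
  then have "H ! i + H ! j = H ! k" by (simp only: add_eq_0_iff_eq[OF add_self])
  moreover have "H ! i \<noteq> H ! j" using ijk distinct by (simp add: nth_eq_iff_index_eq)
  ultimately show "\<exists>a\<in>set H. \<exists>b\<in>set H. a \<noteq> b \<and> a + b \<in> set H"
    using ijk by (metis insert_subset lessThan_iff nth_mem)
next
  assume "\<exists>a\<in>set H. \<exists>b\<in>set H. a \<noteq> b \<and> a + b \<in> set H"
  then obtain a b where ab: "a \<in> set H" "b \<in> set H" "a + b \<in> set H" "a \<noteq> b" by blast
  then obtain i j k where ijk: "i < length H" "j < length H" "k < length H"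
      "H ! i = a" "H ! j = b" "H ! k = a + b"
    by (metis in_set_conv_nth)
  have "a + b \<noteq> a" "a + b \<noteq> b"
    using ab nonzero add_self_left[OF add_self] by (metis add.commute add_0_right)+
  with ab ijk have "i \<noteq> j" "i \<noteq> k" "j \<noteq> k" by auto
  moreover have "a + b + (a + b) = 0" by (rule add_self)
  ultimately have "{i, j, k} \<in> codewords H" "card {i, j, k} = 3"
    using ijk unfolding codewords_def sum_cols_def by (auto simp: add.assoc)
  then show "\<exists>S\<in>codewords H. card S = 3" by blast
qed

lemma has_min_distance_3_iff:
  fixes H :: "'v::comm_monoid_add list"
  assumes add_self: "\<And>z::'v. z + z = 0"
  shows "has_min_distance H 3 \<longleftrightarrow>
    distinct H \<and> 0 \<notin> set H \<and> (\<exists>a\<in>set H. \<exists>b\<in>set H. a \<noteq> b \<and> a + b \<in> set H)"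
proof -
  have "has_min_distance H 3 \<longleftrightarrow>
      (\<exists>S\<in>codewords H. card S = 3) \<and> (\<forall>S\<in>codewords H. S \<noteq> {} \<longrightarrow> 3 \<le> card S)"
    unfolding has_min_distance_def by (metis card.empty zero_neq_numeral)
  also have "\<dots> \<longleftrightarrow> distinct H \<and> 0 \<notin> set H \<and> (\<exists>a\<in>set H. \<exists>b\<in>set H. a \<noteq> b \<and> a + b \<in> set H)"
    using codewords_weight_ge_3_iff[OF add_self, of H] codeword_weight_3_iff[OF add_self, of H]
    by argo
  finally show ?thesis .
qed

lemma sum_cols_symmetric_difference:
  fixes H :: "'v::comm_monoid_add list"
  assumes add_self: "\<And>z::'v. z + z = 0" and "finite S" "finite T"
  shows "sum_cols H (sym_diff S T) = sum_cols H S + sum_cols H T"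
proof -
  let ?s = "sum (nth H)"
  have "?s ((S - T) \<union> (T - S)) = ?s (S - T) + ?s (T - S)"
    using assms by (intro sum.union_disjoint) auto
  also have "\<dots> = (?s (S - T) + ?s (S \<inter> T)) + (?s (T - S) + ?s (S \<inter> T))"
    using add_self by (simp add: ac_simps add_self_left[OF add_self])
  also have "\<dots> = ?s S + ?s T"
    using assms sum.Int_Diff[of S "nth H" T] sum.Int_Diff[of T "nth H" S]
    by (simp add: ac_simps Int_commute)
  finally show ?thesis unfolding sum_cols_def .
qed

lemma card_sum_cols_fibre:
  fixes H :: "'v::comm_monoid_add list"
  assumes add_self: "\<And>z::'v. z + z = 0" and T: "T \<subseteq> {..<length H}"
  shows "card {S \<in> Pow {..<length H}. sum_cols H S = sum_cols H T} = card (codewords H)"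
proof -
  let ?A = "{..<length H}"
  let ?F = "{S \<in> Pow ?A. sum_cols H S = sum_cols H T}"
  have shift: "sym_diff S T \<in> Pow ?A \<and> sum_cols H (sym_diff S T) = sum_cols H S + sum_cols H T"
    if "S \<subseteq> ?A" for S
  proof
    show "sym_diff S T \<in> Pow ?A" using that T by blast
    have "finite S" "finite T" using that T finite_subset by auto
    then show "sum_cols H (sym_diff S T) = sum_cols H S + sum_cols H T"
      by (rule sum_cols_symmetric_difference[OF add_self])
  qed
  have "bij_betw (\<lambda>S. sym_diff S T) (codewords H) ?F"
  proof (rule bij_betw_byWitness[where f' = "\<lambda>S. sym_diff S T"])
    show "\<forall>S\<in>codewords H. sym_diff (sym_diff S T) T = S" "\<forall>S\<in>?F. sym_diff (sym_diff S T) T = S"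
      by auto
    show "(\<lambda>S. sym_diff S T) ` codewords H \<subseteq> ?F" "(\<lambda>S. sym_diff S T) ` ?F \<subseteq> codewords H"
      using shift add_self unfolding codewords_def by auto
  qed
  then show ?thesis by (simp add: bij_betw_same_card)
qed

lemma card_codewords_mult_CARD:
  fixes H :: "'v::comm_monoid_add list"
  assumes add_self: "\<And>z::'v. z + z = 0"
    and onto: "\<And>v. \<exists>S\<subseteq>{..<length H}. sum_cols H S = v"
  shows "card (codewords H) * CARD('v) = 2 ^ length H"
proof -
  let ?A = "{..<length H}"
  define fibre where "fibre v = {S \<in> Pow ?A. sum_cols H S = v}" for v
  have "UNIV \<subseteq> sum_cols H ` Pow ?A"
  proof
    fix v :: 'v
    from onto obtain S where "S \<subseteq> ?A" "sum_cols H S = v" by blast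
    then show "v \<in> sum_cols H ` Pow ?A" by blast
  qed
  then have "finite (UNIV :: 'v set)" by (rule finite_subset) simp
  have fibres: "card (fibre v) = card (codewords H)" for v
  proof -
    obtain T where "T \<subseteq> ?A" "sum_cols H T = v" using onto by blast
    with card_sum_cols_fibre[OF add_self] show ?thesis unfolding fibre_def by blast
  qed
  have "2 ^ length H = card (Pow ?A)" by (simp add: card_Pow)
  also have "Pow ?A = (\<Union>v. fibre v)" unfolding fibre_def by auto
  also have "card \<dots> = (\<Sum>v\<in>UNIV. card (fibre v))"
    using \<open>finite (UNIV :: 'v set)\<close> by (intro card_UN_disjoint) (auto simp: fibre_def)
  also have "\<dots> = card (codewords H) * CARD('v)" by (simp add: fibres)
  finally show ?thesis by simp
qed

lemma card_codewords_eq_power: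
  fixes H :: "'v::comm_monoid_add list"
  assumes "\<And>z::'v. z + z = 0"
    and "\<And>v. \<exists>S\<subseteq>{..<length H}. sum_cols H S = v"
    and "CARD('v) = 2 ^ r"
  shows "card (codewords H) = 2 ^ (length H - r)"
proof -
  have eq: "card (codewords H) * 2 ^ r = 2 ^ length H"
    using card_codewords_mult_CARD[OF assms(1,2)] assms(3) by simp
  then have "2 ^ r dvd (2::nat) ^ length H" by (metis dvd_triv_right)
  then have "r \<le> length H" by (simp add: dvd_power_iff_le)
  then have "(2::nat) ^ length H = 2 ^ (length H - r) * 2 ^ r" by (simp flip: power_add)
  with eq show ?thesis by simp
qed

section \<open>The columns of the extended parity-check matrix\<close>

lemma field_elems_spec: "distinct (field_elems :: 'f::finite list) \<and> set (field_elems :: 'f list) = UNIV"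
proof -
  have "\<exists>xs::'f list. distinct xs \<and> set xs = UNIV"
    using finite_distinct_list[of "UNIV :: 'f set"] by auto
  then show ?thesis unfolding field_elems_def by (rule someI_ex)
qed

lemma distinct_field_elems [simp]: "distinct (field_elems :: 'f::finite list)"
  using field_elems_spec by blast

lemma set_field_elems [simp]: "set (field_elems :: 'f::finite list) = UNIV"
  using field_elems_spec by blast

lemma length_field_elems [simp]: "length (field_elems :: 'f::finite list) = CARD('f)"
  by (metis distinct_card distinct_field_elems set_field_elems)

lemma set_W_minus [simp]: "set (W_minus w) = UNIV - {0, w}"
  unfolding W_minus_def by auto

lemma distinct_W_minus: "distinct (W_minus w)"
  unfolding W_minus_def by simp

lemma length_W_minus:
  assumes "w \<noteq> (0::'f::{field,finite})"
  shows "length (W_minus w) = CARD('f) - 2"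
  using assms distinct_card[OF distinct_W_minus, of w] by (simp add: card_Diff_subset)

lemma set_D6:
  "set (D6 w) = {(0, u, 0) | u. u \<notin> {0, w}} \<union> {(0, w, w)} \<union> {(0, 0, u) | u. u \<notin> {0, w}}"
  unfolding D6_def by auto

lemma distinct_D6:
  assumes "w \<noteq> 0"
  shows "distinct (D6 w :: ('h::zero \<times> 'f::{field,finite} \<times> 'f) list)"
  using assms distinct_W_minus[of w] unfolding D6_def by (auto simp: distinct_map inj_on_def)

lemma length_D6:
  assumes "w \<noteq> (0::'f::{field,finite})"
  shows "length (D6 w :: ('h::zero \<times> 'f \<times> 'f) list) = 2 * (CARD('f) - 2) + 1"
  using length_W_minus[OF assms] unfolding D6_def by simp

definition A2_column :: "'h \<Rightarrow> 'f::{field,finite} option \<Rightarrow> 'f \<Rightarrow> 'h \<times> 'f \<times> 'f" where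
  "A2_column h \<beta> \<xi> = (case \<beta> of Some b \<Rightarrow> (h, \<xi>, b * \<xi>) | None \<Rightarrow> (h, 0, \<xi>))"

lemma A2_column_simps [simp]:
  "A2_column h (Some b) \<xi> = (h, \<xi>, b * \<xi>)"
  "A2_column h None \<xi> = (h, 0, \<xi>)"
  unfolding A2_column_def by simp_all

lemma fst_A2_column [simp]: "fst (A2_column h \<beta> \<xi>) = h"
  by (cases \<beta>) simp_all

lemma A2_column_0 [simp]: "A2_column h \<beta> 0 = (h, 0, 0)"
  by (cases \<beta>) simp_all

lemma inj_A2_column: "inj (A2_column h \<beta>)"
  by (cases \<beta>) (auto simp: inj_def)

lemma A2_eq_map: "A2 h \<beta> = map (A2_column h \<beta>) field_elems"
  unfolding A2_def A2_column_def by (cases \<beta>) simp_all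

lemma set_HC:
  "set (HC w H0 \<beta>) = set (D6 w) \<union> {A2_column (H0 ! j) (\<beta> j) \<xi> | j \<xi>. j < length H0}"
  unfolding HC_def by (auto simp: A2_eq_map)

lemma fst_mem_HC:
  assumes "c \<in> set (HC w H0 \<beta>)"
  shows "fst c \<in> insert 0 (set H0)"
  using assms unfolding set_HC set_D6 by auto

lemma length_HC:
  assumes "w \<noteq> (0::'f::{field,finite})"
  shows "length (HC w H0 \<beta>) = CARD('f) * (length H0 + 2) - 3"
proof -
  have "2 \<le> CARD('f)"
    using card_mono[of UNIV "{0, 1::'f}"] by simp
  moreover have "length (HC w H0 \<beta>) = 2 * (CARD('f) - 2) + 1 + length H0 * CARD('f)"
    using length_D6[OF assms] unfolding HC_def
    by (simp add: A2_eq_map length_concat comp_def sum_list_triv)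
  ultimately show ?thesis by (simp add: algebra_simps)
qed

lemma fst_set_A2 [simp]: "fst ` set (A2 h \<beta>) = {h}"
  by (simp add: A2_eq_map image_image)

lemma distinct_A2: "distinct (A2 h \<beta>)"
  by (simp add: A2_eq_map distinct_map inj_on_subset[OF inj_A2_column])

lemma distinct_concat_A2:
  assumes "distinct H0"
  shows "distinct (concat (map (\<lambda>j. A2 (H0 ! j) (\<beta> j)) [0..<length H0]))"
proof (rule distinct_concat)
  let ?block = "\<lambda>j. A2 (H0 ! j) (\<beta> j)"
  have block_eq_iff: "?block i = ?block j \<longleftrightarrow> i = j" if "i < length H0" "j < length H0" for i j
  proof
    assume "?block i = ?block j"
    then have "{H0 ! i} = {H0 ! j}" by (metis fst_set_A2)
    with that assms show "i = j" by (simp add: nth_eq_iff_index_eq)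
  qed simp
  show "distinct (map ?block [0..<length H0])"
    by (auto simp: distinct_map inj_on_def block_eq_iff simp del: map_eq_conv)
  show "distinct ys" if "ys \<in> set (map ?block [0..<length H0])" for ys
    using that distinct_A2 by auto
  show "set ys \<inter> set zs = {}"
    if "ys \<in> set (map ?block [0..<length H0])" "zs \<in> set (map ?block [0..<length H0])" "ys \<noteq> zs"
    for ys zs
  proof (rule equals0I)
    from that obtain i j where ij: "i < length H0" "j < length H0"
      and ys: "ys = ?block i" and zs: "zs = ?block j" by auto
    fix c assume "c \<in> set ys \<inter> set zs"
    then have "fst c \<in> fst ` set ys" "fst c \<in> fst ` set zs" by blast+
    then have "H0 ! i = H0 ! j" unfolding ys zs by simp
    with ij assms have "i = j" by (simp add: nth_eq_iff_index_eq)
    with that(3) ys zs show False by blast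
  qed
qed

lemma distinct_HC:
  assumes "distinct H0" and "0 \<notin> set H0" and "w \<noteq> 0"
  shows "distinct (HC w H0 \<beta>)"
proof -
  let ?blocks = "concat (map (\<lambda>j. A2 (H0 ! j) (\<beta> j)) [0..<length H0])"
  have "set (D6 w) \<inter> set ?blocks = {}"
  proof (rule equals0I)
    fix c assume c: "c \<in> set (D6 w) \<inter> set ?blocks"
    then have "fst c = 0" unfolding set_D6 by auto
    moreover from c have "fst c \<in> set H0" by (auto simp: A2_eq_map)
    ultimately show False using assms(2) by simp
  qed
  with distinct_D6[OF assms(3)] distinct_concat_A2[OF assms(1), of \<beta>] show ?thesis
    unfolding HC_def by simp
qed

lemma zero_notin_HC:
  assumes "0 \<notin> set H0" and "w \<noteq> 0"
  shows "0 \<notin> set (HC w H0 \<beta>)"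
proof
  assume "0 \<in> set (HC w H0 \<beta>)"
  then have "(0, 0, 0) \<in> set (HC w H0 \<beta>)" by (simp add: zero_prod_def)
  moreover have "(0, 0, 0) \<notin> set (D6 w)" using assms(2) unfolding set_D6 by auto
  ultimately obtain j \<xi> where "j < length H0" "A2_column (H0 ! j) (\<beta> j) \<xi> = (0, 0, 0)"
    unfolding set_HC by auto
  then have "H0 ! j = 0" "j < length H0" by (metis fst_A2_column fst_conv)+
  with assms(1) show False by (metis nth_mem)
qed

lemma mem_HC_A2_column:
  assumes "j < length H0"
  shows "A2_column (H0 ! j) (\<beta> j) \<xi> \<in> set (HC w H0 \<beta>)"
  using assms unfolding set_HC by blast

lemma mem_HC_0ww: "(0, w, w) \<in> set (HC w H0 \<beta>)"
  unfolding set_HC set_D6 by blast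

lemma mem_HC_0x0:
  assumes "x \<noteq> w"
  shows "(0, x, 0) \<in> insert 0 (set (HC w H0 \<beta>))"
  using assms unfolding set_HC set_D6 by (cases "x = 0") (auto simp: zero_prod_def)

lemma mem_HC_00y:
  assumes "y \<noteq> w"
  shows "(0, 0, y) \<in> insert 0 (set (HC w H0 \<beta>))"
  using assms unfolding set_HC set_D6 by (cases "y = 0") (auto simp: zero_prod_def)

section \<open>Covering by at most two columns\<close>

lemma separated_sums_if_indicator_assignment:
  assumes "is_2_partition H0 P" and "indicator_assignment (length H0) P \<beta>"
  shows "\<exists>S\<subseteq>{..<length H0}. card S \<le> 2 \<and> sum_cols H0 S = a \<and> inj_on \<beta> S"
proof -
  obtain S where S: "S \<subseteq> {..<length H0}" "card S \<le> 2" "sum_cols H0 S = a"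
    and apart: "\<forall>i\<in>S. \<forall>j\<in>S. i \<noteq> j \<longrightarrow> \<not> (\<exists>B\<in>P. i \<in> B \<and> j \<in> B)"
    using assms(1) unfolding is_2_partition_def by blast
  have "inj_on \<beta> S"
  proof (rule inj_onI)
    fix i j assume ij: "i \<in> S" "j \<in> S" "\<beta> i = \<beta> j"
    show "i = j"
    proof (rule ccontr)
      assume "i \<noteq> j"
      with ij apart have "\<not> (\<exists>B\<in>P. i \<in> B \<and> j \<in> B)" by blast
      moreover have "i < length H0" "j < length H0" using ij S(1) by auto
      ultimately have "\<beta> i \<noteq> \<beta> j" using assms(2) unfolding indicator_assignment_def by blast
      with ij show False by simp
    qed
  qed
  with S show ?thesis by blast
qed

lemma two_values_if_separated_sums:
  assumes separated: "\<And>a. \<exists>S\<subseteq>{..<length H0}. card S \<le> 2 \<and> sum_cols H0 S = a \<and> inj_on \<beta> S"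
    and "v \<noteq> 0" and "v \<notin> set H0"
  shows "\<exists>i<length H0. \<exists>j<length H0. \<beta> i \<noteq> \<beta> j"
proof -
  obtain S where S: "S \<subseteq> {..<length H0}" "card S \<le> 2" "sum_cols H0 S = v" "inj_on \<beta> S"
    using separated by blast
  have "\<not> card S \<le> 1"
  proof
    assume "card S \<le> 1"
    with S(1,3) have "covered_by H0 1 v" unfolding covered_by_def by blast
    with assms(2,3) show False unfolding covered_by_1_iff by blast
  qed
  with S(2) have "card S = 2" by simp
  then obtain i j where "S = {i, j}" "i \<noteq> j" by (auto simp: card_2_iff)
  with S(1,4) show ?thesis by (auto simp: inj_on_def)
qed

locale HC_char_2 =
  fixes H0 :: "'h::comm_monoid_add list" and \<beta> :: "nat \<Rightarrow> 'f::{field,finite} option" and w :: 'f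
  assumes add_self_h: "\<And>h::'h. h + h = 0"
    and CHAR_f: "CHAR('f) = 2"
    and w_nonzero: "w \<noteq> 0"
begin

lemma add_self_f: "(x::'f) + x = 0"
  by (rule add_self_CHAR_2[OF CHAR_f])

lemma add_self_col: "(c::'h \<times> 'f \<times> 'f) + c = 0"
  using add_self_h add_self_f by (intro add_self_prod)

lemmas add_self_simps [simp] =
  add_self_h add_self_left[OF add_self_h] add_self_f add_self_left[OF add_self_f]

lemmas covered_HC_sumI = covered_by_2_sumI[OF add_self_col, where H = "HC w H0 \<beta>"]

lemma covered_HC_w_axes:
  assumes not_one: "\<forall>j<length H0. \<beta> j \<noteq> Some 1"
    and two_values: "\<exists>i<length H0. \<exists>j<length H0. \<beta> i \<noteq> \<beta> j"
  shows "covered_by (HC w H0 \<beta>) 2 (0, w, 0) \<and> covered_by (HC w H0 \<beta>) 2 (0, 0, w)"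
proof (cases "\<exists>u::'f. u \<noteq> 0 \<and> u \<noteq> w")
  case True
  then obtain u where u: "u \<noteq> 0" "u \<noteq> w" by blast
  then have uw: "u + w \<noteq> w" by simp
  have "covered_by (HC w H0 \<beta>) 2 (0, w, 0)"
    by (rule covered_HC_sumI[OF mem_HC_0x0[OF u(2)] mem_HC_0x0[OF uw]]) simp
  moreover have "covered_by (HC w H0 \<beta>) 2 (0, 0, w)"
    by (rule covered_HC_sumI[OF mem_HC_00y[OF u(2)] mem_HC_00y[OF uw]]) simp
  ultimately show ?thesis ..
next
  case False
  \<comment> \<open>Then the field is \<open>{0, 1}\<close> and the blocks \<open>W_m \<setminus> w\<close> of \<open>D6\<close> are empty; the two
      vectors are obtained inside the blocks \<open>A2(h, 0)\<close> and \<open>A2(h, *)\<close> instead.\<close>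
  then have "w = 1" and "\<And>u. u = 0 \<or> u = w" by (metis one_neq_zero)+
  then have "\<beta> j = None \<or> \<beta> j = Some 0" if "j < length H0" for j
    using not_one that by (metis option.exhaust)
  with two_values obtain i j where ij: "i < length H0" "j < length H0"
    and "\<beta> i = None" "\<beta> j = Some 0"
    by metis
  then have "A2_column (H0 ! i) (\<beta> i) 0 + A2_column (H0 ! i) (\<beta> i) w = (0, 0, w)"
    and "A2_column (H0 ! j) (\<beta> j) 0 + A2_column (H0 ! j) (\<beta> j) w = (0, w, 0)"
    by simp_all
  with ij show ?thesis
    by (metis covered_HC_sumI insertI2 mem_HC_A2_column)
qed

lemma covered_HC_zero_block:
  assumes "\<forall>j<length H0. \<beta> j \<noteq> Some 1" and "\<exists>i<length H0. \<exists>j<length H0. \<beta> i \<noteq> \<beta> j"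
  shows "covered_by (HC w H0 \<beta>) 2 (0, x, y)"
proof -
  note axes = covered_HC_w_axes[OF assms]
  note middle = insertI2[OF mem_HC_0ww]
  consider "x \<noteq> w" "y \<noteq> w" | "x = w" "y = w" | "x = w" "y \<noteq> w" "y \<noteq> 0" | "x = w" "y = 0"
    | "x \<noteq> w" "x \<noteq> 0" "y = w" | "x = 0" "y = w"
    by blast
  then show ?thesis
  proof cases
    case 1
    then show ?thesis by (intro covered_HC_sumI[OF mem_HC_0x0[of x] mem_HC_00y[of y]]) simp_all
  next
    case 2
    then show ?thesis by (intro covered_HC_sumI[OF middle insertI1]) simp
  next
    case 3
    then have "y + w \<noteq> w" by simp
    with 3 show ?thesis by (intro covered_HC_sumI[OF middle mem_HC_00y[of "y + w"]]) (simp_all add: ac_simps)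
  next
    case 5
    then have "x + w \<noteq> w" by simp
    with 5 show ?thesis by (intro covered_HC_sumI[OF mem_HC_0x0[of "x + w"] middle]) (simp_all add: ac_simps)
  qed (use axes in simp_all)
qed

lemma covered_HC_single:
  assumes i: "i < length H0" and not_one: "\<beta> i \<noteq> Some 1"
  shows "covered_by (HC w H0 \<beta>) 2 (H0 ! i, x, y)"
proof (cases "\<beta> i")
  case None
  then have col: "(H0 ! i, 0, \<xi>) \<in> insert 0 (set (HC w H0 \<beta>))" for \<xi>
    using mem_HC_A2_column[OF i, of \<beta> \<xi> w] by simp
  show ?thesis
  proof (cases "x = w")
    case True
    then show ?thesis
      by (intro covered_HC_sumI[OF col[of "y + w"] insertI2[OF mem_HC_0ww]]) (simp add: ac_simps)
  next
    case False
    then show ?thesis by (intro covered_HC_sumI[OF col[of y] mem_HC_0x0[of x]]) simp_all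
  qed
next
  case (Some b)
  then have col: "(H0 ! i, \<xi>, b * \<xi>) \<in> insert 0 (set (HC w H0 \<beta>))" for \<xi>
    using mem_HC_A2_column[OF i, of \<beta> \<xi> w] by simp
  from Some not_one have "b \<noteq> 1" by simp
  show ?thesis
  proof (cases "y + b * x = w")
    case False
    then show ?thesis by (intro covered_HC_sumI[OF col[of x] mem_HC_00y[of "y + b * x"]]) (simp_all add: ac_simps)
  next
    case True
    then have y: "y = w + b * x" by (simp flip: True add: ac_simps)
    show ?thesis
    proof (cases "b = 0")
      case True
      with y show ?thesis
        by (intro covered_HC_sumI[OF col[of "x + w"] insertI2[OF mem_HC_0ww]]) (simp add: ac_simps)
    next
      case False
      \<comment> \<open>Here \<open>b \<noteq> 1\<close> is needed: \<open>(0, w / b, 0)\<close> must be a column of \<open>D6\<close>.\<close>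
      define u where "u = w / b"
      have bu: "b * u = w" using False by (simp add: u_def)
      with \<open>b \<noteq> 1\<close> w_nonzero have "u \<noteq> w" by (metis mult_cancel_right1 mult.commute)
      with y bu show ?thesis
        by (intro covered_HC_sumI[OF col[of "x + u"] mem_HC_0x0[of u]]) (simp_all add: distrib_left ac_simps)
    qed
  qed
qed

lemma covered_HC_double:
  assumes i: "i < length H0" and j: "j < length H0" and distinct_values: "\<beta> i \<noteq> \<beta> j"
  shows "covered_by (HC w H0 \<beta>) 2 (H0 ! i + H0 ! j, x, y)"
proof -
  note col = insertI2[OF mem_HC_A2_column]
  have None_Some: "covered_by (HC w H0 \<beta>) 2 (H0 ! k + H0 ! l, x, y)"
    if k: "k < length H0" "\<beta> k = None" and l: "l < length H0" "\<beta> l = Some b" for k l b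
    using k l
    by (intro covered_HC_sumI[OF col[OF k(1), of \<beta> "y + b * x"] col[OF l(1), of \<beta> x]])
      (simp add: ac_simps)
  show ?thesis
  proof (cases "\<beta> i")
    case None
    with distinct_values obtain b where "\<beta> j = Some b" by (cases "\<beta> j") auto
    with None_Some[OF i None j] show ?thesis .
  next
    case (Some bi)
    show ?thesis
    proof (cases "\<beta> j")
      case None
      with None_Some[OF j None i Some] show ?thesis by (simp add: add.commute)
    next
      case (Some bj)
      \<comment> \<open>Solve \<open>\<xi> + \<eta> = x\<close>, \<open>bi \<xi> + bj \<eta> = y\<close>;
        its determinant \<open>bi + bj\<close> is nonzero as \<open>bi \<noteq> bj\<close>.\<close>
      with \<open>\<beta> i = Some bi\<close> distinct_values have "bi + bj \<noteq> 0"
        by (simp add: add_eq_0_iff_eq[OF add_self_f])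
      define \<xi> where "\<xi> = (y + bj * x) / (bi + bj)"
      have "bi * \<xi> + bj * (x + \<xi>) = (bi + bj) * \<xi> + bj * x" by (simp add: algebra_simps)
      also have "\<dots> = y" using \<open>bi + bj \<noteq> 0\<close> by (simp add: \<xi>_def ac_simps)
      finally have "bi * \<xi> + bj * (x + \<xi>) = y" .
      with \<open>\<beta> i = Some bi\<close> Some show ?thesis
        by (intro covered_HC_sumI[OF col[OF i, of \<beta> \<xi>] col[OF j, of \<beta> "x + \<xi>"]])
          (simp add: ac_simps)
    qed
  qed
qed

lemma covered_HC:
  assumes not_one: "\<forall>j<length H0. \<beta> j \<noteq> Some 1"
    and separated: "\<And>a. \<exists>S\<subseteq>{..<length H0}. card S \<le> 2 \<and> sum_cols H0 S = a \<and> inj_on \<beta> S"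
    and two_values: "\<exists>i<length H0. \<exists>j<length H0. \<beta> i \<noteq> \<beta> j"
  shows "covered_by (HC w H0 \<beta>) 2 v"
proof -
  obtain a x y where v: "v = (a, x, y)" by (cases v)
  obtain S where S: "S \<subseteq> {..<length H0}" "card S \<le> 2" "sum_cols H0 S = a" "inj_on \<beta> S"
    using separated by blast
  have "finite S" using finite_subset[OF S(1)] by simp
  moreover from S(2) have "card S = 0 \<or> card S = 1 \<or> card S = 2" by linarith
  ultimately consider "S = {}" | i where "S = {i}" | i j where "S = {i, j}" "i \<noteq> j"
    by (auto simp: card_1_singleton_iff card_2_iff)
  then show ?thesis
  proof cases
    case 1
    with S(3) v show ?thesis
      using covered_HC_zero_block[OF not_one two_values] by (simp add: sum_cols_def)
  next
    case (2 i)
    with S(1,3) v have "v = (H0 ! i, x, y)" "i < length H0" by (auto simp: sum_cols_def)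
    with not_one show ?thesis using covered_HC_single by simp
  next
    case (3 i j)
    with S v have "v = (H0 ! i + H0 ! j, x, y)" "i < length H0" "j < length H0" "\<beta> i \<noteq> \<beta> j"
      by (auto simp: sum_cols_def)
    then show ?thesis using covered_HC_double by simp
  qed
qed

lemma has_covering_radius_HC_2:
  assumes "has_covering_radius H0 2"
    and not_one: "\<forall>j<length H0. \<beta> j \<noteq> Some 1"
    and separated: "\<And>a. \<exists>S\<subseteq>{..<length H0}. card S \<le> 2 \<and> sum_cols H0 S = a \<and> inj_on \<beta> S"
  shows "has_covering_radius (HC w H0 \<beta>) 2"
proof -
  obtain v where v: "v \<noteq> 0" "v \<notin> set H0"
    using assms(1) unfolding has_covering_radius_2_iff by blast
  have "(v, 0, 0) \<notin> set (HC w H0 \<beta>)" using fst_mem_HC v by fastforce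
  moreover have "(v, 0, 0) \<noteq> 0" using v(1) by (simp add: zero_prod_def)
  moreover have "covered_by (HC w H0 \<beta>) 2 u" for u
    using covered_HC[OF not_one separated two_values_if_separated_sums[OF separated v]] .
  ultimately show ?thesis unfolding has_covering_radius_2_iff by blast
qed

lemma has_min_distance_HC_3:
  assumes "has_min_distance H0 3"
  shows "has_min_distance (HC w H0 \<beta>) 3"
proof -
  from assms obtain a b where H0: "distinct H0" "0 \<notin> set H0"
    and ab: "a \<in> set H0" "b \<in> set H0" "a \<noteq> b" "a + b \<in> set H0"
    unfolding has_min_distance_3_iff[OF add_self_h] by blast
  have col: "(c, 0, 0) \<in> set (HC w H0 \<beta>)" if "c \<in> set H0" for c
    using that mem_HC_A2_column[of _ H0 \<beta> 0 w] by (metis A2_column_0 in_set_conv_nth)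
  have "(a, 0, 0) + (b, 0, 0) \<in> set (HC w H0 \<beta>)" using col[OF ab(4)] by simp
  with col[OF ab(1)] col[OF ab(2)] ab(3)
  have "\<exists>p\<in>set (HC w H0 \<beta>). \<exists>q\<in>set (HC w H0 \<beta>). p \<noteq> q \<and> p + q \<in> set (HC w H0 \<beta>)"
    by blast
  with distinct_HC[OF H0 w_nonzero] zero_notin_HC[OF H0(2) w_nonzero] show ?thesis
    unfolding has_min_distance_3_iff[OF add_self_col] by blast
qed

end

theorem theorem5p1:
  fixes H0 :: "(bit ^ 'r) list"
    and P0 :: "nat set set"
    and n0 m :: nat
    and \<beta> :: "nat \<Rightarrow> 'f::{field,finite} option"
    and w :: 'f
  assumes C0: "is_code H0 n0 (n0 - CARD('r)) 3 2"
    and P0: "is_2_partition H0 P0"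
    and m: "m \<ge> 1" "CARD('f) = 2 ^ m"
    and p: "2 ^ m \<ge> card P0"
    and ind: "indicator_assignment n0 P0 \<beta>"
    and not1: "\<forall>j<n0. \<beta> j \<noteq> Some 1"
    and w: "w \<noteq> 0"
  shows "is_code (HC w H0 \<beta>) (2 ^ m * (n0 + 2) - 3) (2 ^ m * (n0 + 2) - 3 - (CARD('r) + 2 * m)) 3 2"
proof -
  interpret HC_char_2 H0 \<beta> w
    by unfold_locales (simp_all add: vec_eq_iff CHAR_eq_2_if_card_eq_power_2[OF m(2)] w)
  have len: "length H0 = n0" and dist: "has_min_distance H0 3" and cr: "has_covering_radius H0 2"
    using C0 unfolding is_code_def by auto
  note separated = separated_sums_if_indicator_assignment[OF P0 ind[folded len]]
  have cr_HC: "has_covering_radius (HC w H0 \<beta>) 2"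
    using has_covering_radius_HC_2[OF cr not1[folded len] separated] .
  have "card (codewords (HC w H0 \<beta>)) = 2 ^ (length (HC w H0 \<beta>) - (CARD('r) + 2 * m))"
  proof (rule card_codewords_eq_power[OF add_self_col])
    show "\<exists>S\<subseteq>{..<length (HC w H0 \<beta>)}. sum_cols (HC w H0 \<beta>) S = v" for v
      using cr_HC unfolding has_covering_radius_def covered_by_def by blast
    show "CARD((bit ^ 'r) \<times> 'f \<times> 'f) = 2 ^ (CARD('r) + 2 * m)"
      by (simp add: m(2) card_UNIV_bit power_add mult_2)
  qed
  moreover have "length (HC w H0 \<beta>) = 2 ^ m * (n0 + 2) - 3"
    using length_HC[OF w, of H0 \<beta>] len m(2) by simp
  ultimately show ?thesis
    using has_min_distance_HC_3[OF dist] cr_HC unfolding is_code_def by simp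
qed

end
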